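(* Let $A$ be a $\Gamma$-ring (as defined below) and define $N\colon A\to A$ by \begin{align*} Nx &= (Q_0x)^3 +2a\, (Q_0x)^2Q_2x -a\, Q_0x(Q_1x)^2 + a^2\,Q_0x(Q_2x)^2 - 6\, Q_0x\, Q_1x \, Q_2 x \\ &\qquad +2\,(Q_1x)^3 -2a\, Q_1x(Q_2x)^2 +4\,(Q_2x)^3. \end{align*} Then $N(xy)=N(x)N(y)$ for all $x,y\in A$.
   Context: $R=\mathbb{Z}[a]$ is a polynomial ring. $\Gamma$ is the associative ring equipped with a ring homomorphism $\eta\colon R\to\Gamma$, generated over $R$ by $Q_0,Q_1,Q_2$ subject to: (i) the $Q_i$ commute with elements of $\mathbb{Z}\subset R$, and $Q_0\,a = a^2Q_0-2aQ_1+6Q_2$, $Q_1\,a=3Q_0+aQ_2$, $Q_2\,a=-aQ_0+3Q_1$; (ii) $Q_1Q_0=2Q_2Q_1-2Q_0Q_2$ and $Q_2Q_0=Q_0Q_1+aQ_0Q_2-2Q_1Q_2$. A $\Gamma$-ring is a commutative $R$-algebra $A$ with a left $\Gamma$-module structure extending its $R$-module structure, such that $Q_0\cdot 1=1$, $Q_1\cdot1=Q_2\cdot 1=0$, and the cartan formulas hold for all $x,y\in A$: $Q_0(xy) = Q_0x\,Q_0y + 2\,Q_1x\,Q_2y+2\,Q_2x\, Q_1y$, $Q_1(xy) = Q_0x\, Q_1y + Q_1x\, Q_0y + a\,Q_1x\, Q_2y +a\, Q_2x\, Q_1y +2\, Q_2x\, Q_2y$, $Q_2(xy) = Q_0x\,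 Q_2y+Q_2x\, Q_0y+Q_1x\, Q_1y + a\, Q_2x\, Q_2y$. (Equivalently, a commutative monoid object in $\Gamma$-modules with the tensor product given by these formulas and unit $R$.) *)

theory Defs
  imports Main
begin

text \<open>A commutative R-algebra A, R = Z[a], is a commutative ring A together with the
image al of the generator a in A.  A left Gamma-module structure extending the R-module
structure is given by additive operators Q0 Q1 Q2 on A (the action of the generators of Gamma)
satisfying the defining relations of Gamma, where the action of a is multiplication by al.\<close>

definition gamma_module :: "'a::comm_ring_1 \<Rightarrow> ('a \<Rightarrow> 'a) \<Rightarrow> ('a \<Rightarrow> 'a) \<Rightarrow> ('a \<Rightarrow> 'a) \<Rightarrow> bool" where
  "gamma_module al Q0 Q1 Q2 \<longleftrightarrow>
     (\<forall>x y. Q0 (x + y) = Q0 x + Q0 y \<and> Q1 (x + y) = Q1 x + Q1 y \<and> Q2 (x + y) = Q2 x + Q2 y) \<and>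
     (\<forall>x. Q0 (al * x) = al^2 * Q0 x - 2 * al * Q1 x + 6 * Q2 x) \<and>
     (\<forall>x. Q1 (al * x) = 3 * Q0 x + al * Q2 x) \<and>
     (\<forall>x. Q2 (al * x) = - al * Q0 x + 3 * Q1 x) \<and>
     (\<forall>x. Q1 (Q0 x) = 2 * Q2 (Q1 x) - 2 * Q0 (Q2 x)) \<and>
     (\<forall>x. Q2 (Q0 x) = Q0 (Q1 x) + al * Q0 (Q2 x) - 2 * Q1 (Q2 x))"

definition gamma_ring :: "'a::comm_ring_1 \<Rightarrow> ('a \<Rightarrow> 'a) \<Rightarrow> ('a \<Rightarrow> 'a) \<Rightarrow> ('a \<Rightarrow> 'a) \<Rightarrow> bool" where
  "gamma_ring al Q0 Q1 Q2 \<longleftrightarrow>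
     gamma_module al Q0 Q1 Q2 \<and>
     Q0 1 = 1 \<and> Q1 1 = 0 \<and> Q2 1 = 0 \<and>
     (\<forall>x y. Q0 (x * y) = Q0 x * Q0 y + 2 * Q1 x * Q2 y + 2 * Q2 x * Q1 y) \<and>
     (\<forall>x y. Q1 (x * y) = Q0 x * Q1 y + Q1 x * Q0 y + al * Q1 x * Q2 y + al * Q2 x * Q1 y
                          + 2 * Q2 x * Q2 y) \<and>
     (\<forall>x y. Q2 (x * y) = Q0 x * Q2 y + Q2 x * Q0 y + Q1 x * Q1 y + al * Q2 x * Q2 y)"

definition normN :: "'a::comm_ring_1 \<Rightarrow> ('a \<Rightarrow> 'a) \<Rightarrow> ('a \<Rightarrow> 'a) \<Rightarrow> ('a \<Rightarrow> 'a) \<Rightarrow> 'a \<Rightarrow> 'a" where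
  "normN al Q0 Q1 Q2 x =
     (Q0 x)^3 + 2 * al * (Q0 x)^2 * Q2 x - al * Q0 x * (Q1 x)^2 + al^2 * Q0 x * (Q2 x)^2
     - 6 * Q0 x * Q1 x * Q2 x + 2 * (Q1 x)^3 - 2 * al * Q1 x * (Q2 x)^2 + 4 * (Q2 x)^3"

end

theory Submission
  imports Defs
begin

(* By the Cartan formulas, x \<mapsto> Q0 x + Q1 x u + Q2 x u^2 is a ring homomorphism into the
   cubic algebra R[u]/(u^3 - a u - 2), and N x is the norm of that element, i.e. the determinant
   of multiplication by it.  Multiplicativity of N is therefore a polynomial identity in the
   coordinates. *)

definition cubic_mult :: "'a::comm_ring_1 \<Rightarrow> 'a \<times> 'a \<times> 'a \<Rightarrow> 'a \<times> 'a \<times> 'a \<Rightarrow> 'a \<times> 'a \<times> 'a" where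
  "cubic_mult al = (\<lambda>(a0, a1, a2) (b0, b1, b2).
     (a0 * b0 + 2 * a1 * b2 + 2 * a2 * b1,
      a0 * b1 + a1 * b0 + al * a1 * b2 + al * a2 * b1 + 2 * a2 * b2,
      a0 * b2 + a2 * b0 + a1 * b1 + al * a2 * b2))"

definition cubic_norm :: "'a::comm_ring_1 \<Rightarrow> 'a \<times> 'a \<times> 'a \<Rightarrow> 'a" where
  "cubic_norm al = (\<lambda>(c0, c1, c2).
     c0^3 + 2 * al * c0^2 * c2 - al * c0 * c1^2 + al^2 * c0 * c2^2
     - 6 * c0 * c1 * c2 + 2 * c1^3 - 2 * al * c1 * c2^2 + 4 * c2^3)"

lemma cubic_norm_mult:
  "cubic_norm al (cubic_mult al p q) = cubic_norm al p * cubic_norm al q"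
  by (cases p; cases q)
     (simp add: cubic_mult_def cubic_norm_def algebra_simps power2_eq_square power3_eq_cube)

lemma gamma_ring_coordinates_mult:
  assumes "gamma_ring al Q0 Q1 Q2"
  shows "(Q0 (x * y), Q1 (x * y), Q2 (x * y)) =
         cubic_mult al (Q0 x, Q1 x, Q2 x) (Q0 y, Q1 y, Q2 y)"
  using assms by (simp add: gamma_ring_def cubic_mult_def)

lemma normN_eq_cubic_norm: "normN al Q0 Q1 Q2 x = cubic_norm al (Q0 x, Q1 x, Q2 x)"
  by (simp add: normN_def cubic_norm_def)

theorem mainTheorem4:
  fixes al :: "'a::comm_ring_1" and Q0 Q1 Q2 :: "'a \<Rightarrow> 'a"
  assumes "gamma_ring al Q0 Q1 Q2"
  shows "\<forall>x y. normN al Q0 Q1 Q2 (x * y) = normN al Q0 Q1 Q2 x * normN al Q0 Q1 Q2 y"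
  using gamma_ring_coordinates_mult [OF assms]
  by (simp add: normN_eq_cubic_norm cubic_norm_mult)

end
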